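(* In the changepoint model of the context, let $T_\ell:\mathbb X\to\mathbb R$ be measurable and integrable with respect to all $H_{ji}$, and set $H^{T_\ell}_{ji}=\int T_\ell(x)\,H_{ji}(dx)$. Then for $0<i\le n$, $$\mathbb E\big[T_\ell(X_i)\mathbf 1\{C_i=i\}\mid Y_{1:n}=y_{1:n}\big]=\sum_{j=i}^{n-1}H^{T_\ell}_{ij}\,\tilde c_{ij}\,\tilde q_{j+1}+H^{T_\ell}_{in}\,\tilde c_{in}.$$
   Context: Model: Let $n\ge 1$ and fix observed data $y_1,\dots,y_n$. Let $(\mathbb X,\mathcal X)$, $(\mathbb Y,\mathcal Y)$ be standard Borel spaces, $\psi$ a $\sigma$-finite measure on $(\mathbb Y,\mathcal Y)$, $\mathcal J$ a probability measure on $(\mathbb X,\mathcal X)$, and $q_{ji}\in[0,1]$ for $0\le j<i\le n$. The model consists of random variables $C_i\in\{0,\dots,i\}$, $X_i\in\mathbb X$, $Y_i\in\mathbb Y$, $i=1,\dots,n$, with joint law factorizing as: $P(C_1=0)=q_{01}$, $P(C_1=1)=1-q_{01}$; for $i\ge2$, $C_i$ depends on the past only through $C_{i-1}$, with $P(C_i=j\mid C_{i-1}=j)=q_{ji}$ and $P(C_i=i\mid C_{i-1}=j)=1-q_{ji}$ ($0\le j\le i-1$); $X_1\sim\mathcal J$ independent of $C_1$; for $i\ge 2$, $X_i$ depends on the past only through $(C_i,X_{i-1})$, with $X_i\sim\mathcal J$ if $C_i=i$ and $X_i=X_{i-1}$ if $C_i<i$; $Y_i$ depends on all other variables only through $X_i$,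 with density $p(Y_i=y\mid X_i=x)$ w.r.t. $\psi$. Assume $\int\prod_{\ell=j}^i p(Y_\ell=y_\ell\mid X_\ell=x)\,\mathcal J(dx)>0$ for all $0<j\le i\le n$. $Y_{a:b}=y_{a:b}$ abbreviates $Y_a=y_a,\dots,Y_b=y_b$. Notation: $H_{ji}=P(X_i\in\cdot\mid C_i=j,Y_{1:i}=y_{1:i})$; $\tilde c_{ji}=P(C_i=j\mid C_{i+1}=i+1,Y_{1:i}=y_{1:i})$ for $0<i<n$, and $\tilde c_{jn}=P(C_n=j\mid Y_{1:n}=y_{1:n})$; $\tilde q_i=P(C_i=i\mid Y_{1:n}=y_{1:n})$. *)

theory Defs
  imports "HOL-Probability.Probability"
begin

text \<open>A state at time i is the pair (C_i, X_i).
  The prior law of the path (C_1,X_1),...,(C_k,X_k) is a measure on functions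
  nat => nat * 'x, extensional on {1..k}. The observations Y_i = y_i enter only
  through the likelihood prod_l p(Y_l = y_l | X_l = x); conditioning on
  Y_{1:i} = y_{1:i} is defined by Bayes' formula (density version).\<close>

definition cp_S :: "(nat \<times> 'x::topological_space) measure" where
  "cp_S = count_space UNIV \<Otimes>\<^sub>M borel"

definition cp_init :: "(nat \<Rightarrow> nat \<Rightarrow> real) \<Rightarrow> 'x::topological_space measure
    \<Rightarrow> (nat \<times> 'x) measure" where
  "cp_init q J = measure_pmf (bernoulli_pmf (q 0 1)) \<bind>
      (\<lambda>b. distr J cp_S (\<lambda>x. (if b then 0 else 1, x)))"

definition cp_step :: "(nat \<Rightarrow> nat \<Rightarrow> real) \<Rightarrow> 'x::topological_space measure
    \<Rightarrow> nat \<Rightarrow> nat \<times> 'x \<Rightarrow> (nat \<times> 'x) measure" where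
  "cp_step q J i s = measure_pmf (bernoulli_pmf (q (fst s) i)) \<bind>
      (\<lambda>b. if b then return cp_S s else distr J cp_S (\<lambda>x. (i, x)))"

primrec cp_prior :: "(nat \<Rightarrow> nat \<Rightarrow> real) \<Rightarrow> 'x::topological_space measure
    \<Rightarrow> nat \<Rightarrow> (nat \<Rightarrow> nat \<times> 'x) measure" where
  "cp_prior q J 0 = return (PiM {} (\<lambda>_. cp_S)) (\<lambda>_. undefined)"
| "cp_prior q J (Suc k) = cp_prior q J k \<bind>
      (\<lambda>\<omega>. distr (if k = 0 then cp_init q J else cp_step q J (Suc k) (\<omega> k))
                 (PiM {1..Suc k} (\<lambda>_. cp_S)) (\<lambda>s. fun_upd \<omega> (Suc k) s))"

definition cp_C :: "nat \<Rightarrow> (nat \<Rightarrow> nat \<times> 'x) \<Rightarrow> nat" where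
  "cp_C i \<omega> = fst (\<omega> i)"

definition cp_X :: "nat \<Rightarrow> (nat \<Rightarrow> nat \<times> 'x) \<Rightarrow> 'x" where
  "cp_X i \<omega> = snd (\<omega> i)"

definition cp_lik :: "('x \<Rightarrow> 'y \<Rightarrow> real) \<Rightarrow> (nat \<Rightarrow> 'y) \<Rightarrow> nat
    \<Rightarrow> (nat \<Rightarrow> nat \<times> 'x) \<Rightarrow> real" where
  "cp_lik p y i \<omega> = (\<Prod>l\<in>{1..i}. p (cp_X l \<omega>) (y l))"

text \<open>E[ f | B, Y_{1:i} = y_{1:i} ] for an event B of the (C,X)-path, computed
  with the prior law of the whole path (C,X)_{1:n}.\<close>
definition cp_condE :: "(nat \<Rightarrow> nat \<Rightarrow> real) \<Rightarrow> 'x::topological_space measure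
    \<Rightarrow> ('x \<Rightarrow> 'y \<Rightarrow> real) \<Rightarrow> (nat \<Rightarrow> 'y) \<Rightarrow> nat \<Rightarrow> nat
    \<Rightarrow> ((nat \<Rightarrow> nat \<times> 'x) \<Rightarrow> real) \<Rightarrow> (nat \<Rightarrow> nat \<times> 'x) set \<Rightarrow> real" where
  "cp_condE q J p y n i f B =
     (\<integral>\<omega>. f \<omega> * indicator B \<omega> * cp_lik p y i \<omega> \<partial>cp_prior q J n)
     / (\<integral>\<omega>. indicator B \<omega> * cp_lik p y i \<omega> \<partial>cp_prior q J n)"

definition cp_condP :: "(nat \<Rightarrow> nat \<Rightarrow> real) \<Rightarrow> 'x::topological_space measure
    \<Rightarrow> ('x \<Rightarrow> 'y \<Rightarrow> real) \<Rightarrow> (nat \<Rightarrow> 'y) \<Rightarrow> nat \<Rightarrow> nat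
    \<Rightarrow> (nat \<Rightarrow> nat \<times> 'x) set \<Rightarrow> (nat \<Rightarrow> nat \<times> 'x) set \<Rightarrow> real" where
  "cp_condP q J p y n i A B = cp_condE q J p y n i (indicator A) B"

text \<open>H_{ji} = P(X_i \<in> . | C_i = j, Y_{1:i} = y_{1:i}) as a measure on 'x.\<close>
definition cp_H :: "(nat \<Rightarrow> nat \<Rightarrow> real) \<Rightarrow> 'x::topological_space measure
    \<Rightarrow> ('x \<Rightarrow> 'y \<Rightarrow> real) \<Rightarrow> (nat \<Rightarrow> 'y) \<Rightarrow> nat \<Rightarrow> nat \<Rightarrow> nat \<Rightarrow> 'x measure" where
  "cp_H q J p y n j i =
     distr (density (cp_prior q J n)
              (\<lambda>\<omega>. ennreal (indicator {\<omega>. cp_C i \<omega> = j} \<omega> * cp_lik p y i \<omega>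
                 / (\<integral>\<omega>'. indicator {\<omega>'. cp_C i \<omega>' = j} \<omega>' * cp_lik p y i \<omega>' \<partial>cp_prior q J n))))
           borel (cp_X i)"

definition cp_ct :: "(nat \<Rightarrow> nat \<Rightarrow> real) \<Rightarrow> 'x::topological_space measure
    \<Rightarrow> ('x \<Rightarrow> 'y \<Rightarrow> real) \<Rightarrow> (nat \<Rightarrow> 'y) \<Rightarrow> nat \<Rightarrow> nat \<Rightarrow> nat \<Rightarrow> real" where
  "cp_ct q J p y n j i =
     (if i < n then cp_condP q J p y n i {\<omega>. cp_C i \<omega> = j} {\<omega>. cp_C (Suc i) \<omega> = Suc i}
      else cp_condP q J p y n n {\<omega>. cp_C n \<omega> = j} UNIV)"

definition cp_qt :: "(nat \<Rightarrow> nat \<Rightarrow> real) \<Rightarrow> 'x::topological_space measure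
    \<Rightarrow> ('x \<Rightarrow> 'y \<Rightarrow> real) \<Rightarrow> (nat \<Rightarrow> 'y) \<Rightarrow> nat \<Rightarrow> nat \<Rightarrow> real" where
  "cp_qt q J p y n i = cp_condP q J p y n n {\<omega>. cp_C i \<omega> = i} UNIV"

end

theory Submission
  imports Defs
begin

text \<open>
  On the event \<open>C_i = i\<close> the segment that starts at time \<open>i\<close> ends at a unique time
  \<open>j \<ge> i\<close>: either a changepoint occurs at \<open>j + 1\<close>, or \<open>j = n\<close>. Almost every path of the
  prior keeps \<open>(C, X)\<close> constant between changepoints, so \<open>T(X_i) 1{C_i = i}\<close> splits into
  \<open>\<Sum>j. T(X_j) 1{C_j = i} 1{C_(j+1) = j + 1}\<close> plus \<open>T(X_n) 1{C_n = i}\<close>.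
  At a changepoint the new state is drawn afresh from \<open>J\<close>, so the likelihood of the
  observations after it factors off: integrating a function of the past against the
  likelihood on \<open>{C_(j+1) = j + 1}\<close> gives its integral against the jump probability times a
  constant that depends only on the future. In the ratios defining \<open>H_ij\<close>, \<open>c_ij\<close> and
  \<open>q_(j+1)\<close> the jump probability and this constant cancel, which yields the \<open>j\<close>-th summand.
\<close>

(* Keeps \<open>1\<close> from being rewritten to \<open>Suc 0\<close>, so that simplified goals about
   \<open>paths k = PiM {1..k} _\<close> still match the rules stated for them. *)
declare One_nat_def[simp del]

lemma integral_eq_cmult_if_nn_integral_parts_eq:
  fixes u v :: "_ \<Rightarrow> real"
  assumes u: "u \<in> borel_measurable M" and v: "integrable N v" and c: "0 \<le> c"
    and pos: "(\<integral>\<^sup>+x. ennreal (u x) \<partial>M) = ennreal c * (\<integral>\<^sup>+x. ennreal (v x) \<partial>N)"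
    and neg: "(\<integral>\<^sup>+x. ennreal (- u x) \<partial>M) = ennreal c * (\<integral>\<^sup>+x. ennreal (- v x) \<partial>N)"
  shows "integrable M u" and "integral\<^sup>L M u = c * integral\<^sup>L N v"
proof -
  have "(\<integral>\<^sup>+x. ennreal (v x) \<partial>N) \<noteq> \<infinity>" "(\<integral>\<^sup>+x. ennreal (- v x) \<partial>N) \<noteq> \<infinity>"
    using v unfolding real_integrable_def by auto
  then have "(\<integral>\<^sup>+x. ennreal (u x) \<partial>M) \<noteq> \<infinity>" "(\<integral>\<^sup>+x. ennreal (- u x) \<partial>M) \<noteq> \<infinity>"
    unfolding pos neg by (simp_all add: ennreal_mult_eq_top_iff)
  with u show iu: "integrable M u"
    unfolding real_integrable_def by auto
  have "integral\<^sup>L M u = enn2real (ennreal c * (\<integral>\<^sup>+x. ennreal (v x) \<partial>N))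
      - enn2real (ennreal c * (\<integral>\<^sup>+x. ennreal (- v x) \<partial>N))"
    unfolding real_lebesgue_integral_def[OF iu] pos neg ..
  also have "\<dots> = c * integral\<^sup>L N v"
    unfolding real_lebesgue_integral_def[OF v] using c by (simp add: enn2real_mult right_diff_distrib)
  finally show "integral\<^sup>L M u = c * integral\<^sup>L N v" .
qed

(* In the application \<open>v / B\<close> is the \<open>H\<close>-mean of \<open>T\<close>, \<open>D / E\<close> the probability that the segment ends,
   \<open>F\<close> the weight of a changepoint and \<open>\<beta>\<close> the jump probability. *)
lemma integral_eq_of_nn_integral_factorization:
  fixes W v :: "_ \<Rightarrow> real" and \<beta> :: real and B D E F R :: ennreal
  assumes W: "W \<in> borel_measurable M" and "0 \<le> \<beta>"
    and D: "D = \<beta> * B" "D \<le> E" and F: "F = E * R" "F \<noteq> \<infinity>"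
    and W_pos: "(\<integral>\<^sup>+x. ennreal (W x) \<partial>M) = \<beta> * (\<integral>\<^sup>+x. ennreal (v x) \<partial>M) * R"
    and W_neg: "(\<integral>\<^sup>+x. ennreal (- W x) \<partial>M) = \<beta> * (\<integral>\<^sup>+x. ennreal (- v x) \<partial>M) * R"
    and v_null: "B = 0 \<Longrightarrow> (\<integral>\<^sup>+x. ennreal (v x) \<partial>M) = 0 \<and> (\<integral>\<^sup>+x. ennreal (- v x) \<partial>M) = 0"
    and v_int: "B \<noteq> 0 \<Longrightarrow> B \<noteq> \<infinity> \<Longrightarrow> integrable M v"
  shows "integrable M W \<and>
    integral\<^sup>L M W = integral\<^sup>L M v / enn2real B * (enn2real D / enn2real E) * enn2real F"
proof (cases "\<beta> = 0 \<or> R = 0 \<or> B = 0")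
  case True
  with W_pos W_neg v_null have "(\<integral>\<^sup>+x. ennreal (W x) \<partial>M) = 0" "(\<integral>\<^sup>+x. ennreal (- W x) \<partial>M) = 0"
    by auto
  with integral_eq_cmult_if_nn_integral_parts_eq[OF W, where v="\<lambda>_. 0" and c=0 and N=M]
  have "integrable M W" "integral\<^sup>L M W = 0"
    by simp_all
  moreover have "enn2real D = 0 \<or> enn2real F = 0 \<or> enn2real B = 0"
    using True D F by auto
  ultimately show ?thesis
    by auto
next
  case False
  with \<open>0 \<le> \<beta>\<close> have "0 < \<beta>" "R \<noteq> 0" "B \<noteq> 0"
    by auto
  then have "E \<noteq> 0"
    using D by (auto simp: zero_less_iff_neq_zero)
  with F \<open>R \<noteq> 0\<close> have "E \<noteq> \<infinity>" "R \<noteq> \<infinity>"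
    by (auto simp: ennreal_mult_eq_top_iff)
  with D \<open>0 < \<beta>\<close> have "B \<noteq> \<infinity>"
    by (auto simp: ennreal_mult_eq_top_iff top_unique)
  define r where "r = enn2real R"
  have R: "R = ennreal r" and "0 \<le> r"
    using \<open>R \<noteq> \<infinity>\<close> by (simp_all add: r_def ennreal_enn2real_if)
  have "0 < enn2real B" "0 < enn2real E"
    using \<open>B \<noteq> 0\<close> \<open>B \<noteq> \<infinity>\<close> \<open>E \<noteq> 0\<close> \<open>E \<noteq> \<infinity>\<close>
    by (simp_all add: enn2real_positive_iff top.not_eq_extremum zero_less_iff_neq_zero)
  have "integrable M W" "integral\<^sup>L M W = (\<beta> * r) * integral\<^sup>L M v"
    using \<open>0 < \<beta>\<close> \<open>0 \<le> r\<close> W_pos W_neg v_int[OF \<open>B \<noteq> 0\<close> \<open>B \<noteq> \<infinity>\<close>] unfolding R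
    by (intro integral_eq_cmult_if_nn_integral_parts_eq[OF W, where c="\<beta> * r"];
      simp add: ennreal_mult ac_simps)+
  moreover have "enn2real D = \<beta> * enn2real B" "enn2real F = enn2real E * r"
    unfolding D F R using \<open>0 < \<beta>\<close> \<open>0 \<le> r\<close> by (simp_all add: enn2real_mult)
  ultimately show ?thesis
    using \<open>0 < enn2real B\<close> \<open>0 < enn2real E\<close> by (simp add: field_simps)
qed

section \<open>The prior as a chain of kernels\<close>

locale changepoint_prior =
  fixes q :: "nat \<Rightarrow> nat \<Rightarrow> real" and J :: "'x::{second_countable_topology, t2_space} measure"
  assumes prob_space_J: "prob_space J" and sets_J: "sets J = sets borel"
begin

abbreviation paths :: "nat \<Rightarrow> (nat \<Rightarrow> nat \<times> 'x) measure" where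
  "paths k \<equiv> PiM {1..k} (\<lambda>_. cp_S)"

abbreviation prior :: "nat \<Rightarrow> (nat \<Rightarrow> nat \<times> 'x) measure" where
  "prior k \<equiv> cp_prior q J k"

definition jump_prob :: "nat \<Rightarrow> nat \<Rightarrow> real" where
  "jump_prob c i = pmf (bernoulli_pmf (q c i)) False"

lemma jump_prob_nonneg: "0 \<le> jump_prob c i"
  by (simp add: jump_prob_def)

definition transition :: "nat \<Rightarrow> (nat \<Rightarrow> nat \<times> 'x) \<Rightarrow> (nat \<times> 'x) measure" where
  "transition k \<omega> = (if k = 0 then cp_init q J else cp_step q J (Suc k) (\<omega> k))"

lemma space_J[simp]: "space J = UNIV"
  using sets_eq_imp_space_eq[OF sets_J] by simp

lemma space_cp_S[simp]: "space cp_S = UNIV"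
  by (simp add: cp_S_def space_pair_measure)

lemma sets_cp_step[simp]: "sets (cp_step q J i s) = sets cp_S"
  unfolding cp_step_def by (subst sets_bind[where N=cp_S]) auto

lemma sets_cp_init[simp]: "sets (cp_init q J) = sets cp_S"
  unfolding cp_init_def by (subst sets_bind[where N=cp_S]) auto

lemma space_cp_step[simp]: "space (cp_step q J i s) = UNIV"
  using sets_eq_imp_space_eq[OF sets_cp_step] by simp

lemma space_cp_init[simp]: "space (cp_init q J) = UNIV"
  using sets_eq_imp_space_eq[OF sets_cp_init] by simp

lemma measurable_Pair_cp_S[measurable]: "Pair c \<in> J \<rightarrow>\<^sub>M cp_S"
  unfolding cp_S_def measurable_cong_sets[OF sets_J refl] by measurable

lemma measurable_fst_cp_S[measurable]: "fst \<in> cp_S \<rightarrow>\<^sub>M count_space UNIV"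
  unfolding cp_S_def by simp

lemma subprob_space_distr_Pair: "subprob_space (distr J cp_S (Pair c))"
  by (intro prob_space_imp_subprob_space prob_space.prob_space_distr prob_space_J) simp

lemma nn_integral_cp_step:
  assumes g: "g \<in> borel_measurable cp_S"
  shows "(\<integral>\<^sup>+s. g s \<partial>cp_step q J i s') =
     ennreal (pmf (bernoulli_pmf (q (fst s') i)) True) * g s'
   + ennreal (jump_prob (fst s') i) * (\<integral>\<^sup>+x. g (i, x) \<partial>J)"
proof -
  have "(\<lambda>b. if b then return cp_S s' else distr J cp_S (Pair i))
      \<in> bernoulli_pmf (q (fst s') i) \<rightarrow>\<^sub>M subprob_algebra cp_S"
    by (auto simp: space_subprob_algebra subprob_space_return subprob_space_distr_Pair)
  from nn_integral_bind[OF g this] show ?thesis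
    unfolding cp_step_def jump_prob_def
    by (subst (asm) nn_integral_measure_pmf_support[where A=UNIV])
      (auto simp: UNIV_bool nn_integral_return nn_integral_distr g ac_simps)
qed

lemma nn_integral_cp_init:
  assumes g: "g \<in> borel_measurable cp_S"
  shows "(\<integral>\<^sup>+s. g s \<partial>cp_init q J) =
     ennreal (pmf (bernoulli_pmf (q 0 1)) True) * (\<integral>\<^sup>+x. g (0, x) \<partial>J)
   + ennreal (jump_prob 0 1) * (\<integral>\<^sup>+x. g (1, x) \<partial>J)"
proof -
  have "(\<lambda>b. distr J cp_S (Pair (if b then 0 else 1))) \<in> bernoulli_pmf (q 0 1) \<rightarrow>\<^sub>M subprob_algebra cp_S"
    by (simp add: space_subprob_algebra subprob_space_distr_Pair)
  from nn_integral_bind[OF g this] show ?thesis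
    unfolding cp_init_def jump_prob_def
    by (subst (asm) nn_integral_measure_pmf_support[where A=UNIV])
      (auto simp: UNIV_bool nn_integral_distr g ac_simps)
qed

lemma ennreal_pmf_bernoulli_True_plus_False:
  "ennreal (pmf (bernoulli_pmf a) True) + ennreal (pmf (bernoulli_pmf a) False) = 1"
proof -
  have "(\<Sum>b\<in>UNIV. pmf (bernoulli_pmf a) b) = 1"
    by (rule sum_pmf_eq_1) auto
  then show ?thesis
    by (simp add: UNIV_bool ennreal_plus[symmetric] del: ennreal_plus)
qed

lemma emeasure_J_UNIV[simp]: "emeasure J UNIV = 1"
  using prob_space.emeasure_space_1[OF prob_space_J] by simp

lemma prob_space_cp_step: "prob_space (cp_step q J i s)"
proof
  have "emeasure (cp_step q J i s) (space (cp_step q J i s)) = (\<integral>\<^sup>+x. 1 \<partial>cp_step q J i s)"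
    by simp
  also have "\<dots> = 1"
    by (subst nn_integral_cp_step) (auto simp: jump_prob_def ennreal_pmf_bernoulli_True_plus_False)
  finally show "emeasure (cp_step q J i s) (space (cp_step q J i s)) = 1" .
qed

lemma prob_space_cp_init: "prob_space (cp_init q J)"
proof
  have "emeasure (cp_init q J) (space (cp_init q J)) = (\<integral>\<^sup>+x. 1 \<partial>cp_init q J)"
    by simp
  also have "\<dots> = 1"
    by (subst nn_integral_cp_init) (auto simp: jump_prob_def ennreal_pmf_bernoulli_True_plus_False)
  finally show "emeasure (cp_init q J) (space (cp_init q J)) = 1" .
qed

lemma measurable_cp_step: "cp_step q J i \<in> cp_S \<rightarrow>\<^sub>M subprob_algebra cp_S"
proof -
  have "(\<lambda>c. measure_pmf (bernoulli_pmf (q c i))) \<in> count_space UNIV \<rightarrow>\<^sub>M subprob_algebra (count_space UNIV)"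
    by (auto simp: space_subprob_algebra intro!: prob_space_imp_subprob_space measure_pmf.prob_space_axioms)
  from measurable_compose[OF measurable_fst_cp_S this]
  have bern: "(\<lambda>s. measure_pmf (bernoulli_pmf (q (fst s) i))) \<in> cp_S \<rightarrow>\<^sub>M subprob_algebra (count_space UNIV)"
    .
  have "(\<lambda>(s, b). if b then return cp_S s else distr J cp_S (Pair i))
      \<in> cp_S \<Otimes>\<^sub>M count_space UNIV \<rightarrow>\<^sub>M subprob_algebra cp_S"
    unfolding case_prod_beta'
    by (rule measurable_If[OF measurable_compose[OF measurable_fst return_measurable] measurable_const])
      (auto simp: space_subprob_algebra subprob_space_distr_Pair)
  from measurable_bind'[OF bern this] show ?thesis
    unfolding cp_step_def[abs_def] by simp
qed

lemma sets_transition[simp]: "sets (transition k \<omega>) = sets cp_S"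
  by (simp add: transition_def)

lemma prob_space_transition: "prob_space (transition k \<omega>)"
  by (simp add: transition_def prob_space_cp_init prob_space_cp_step)

lemma measurable_transition: "transition k \<in> paths k \<rightarrow>\<^sub>M subprob_algebra cp_S"
proof (cases "k = 0")
  case True
  then show ?thesis
    by (auto simp: transition_def[abs_def] space_subprob_algebra prob_space_cp_init prob_space_imp_subprob_space)
next
  case False
  then have "(\<lambda>\<omega>. \<omega> k) \<in> paths k \<rightarrow>\<^sub>M cp_S"
    by simp
  with False show ?thesis
    unfolding transition_def[abs_def] by (simp add: measurable_compose[OF _ measurable_cp_step])
qed

lemma measurable_fun_upd_Suc: "(\<lambda>(\<omega>, s). fun_upd \<omega> (Suc k) s) \<in> paths k \<Otimes>\<^sub>M cp_S \<rightarrow>\<^sub>M paths (Suc k)"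
proof -
  have "{1..Suc k} = insert (Suc k) {1..k}"
    by auto
  then show ?thesis
    by (simp only:) (rule measurable_add_dim)
qed

lemma measurable_fun_upd_Suc1: "\<omega> \<in> space (paths k) \<Longrightarrow> fun_upd \<omega> (Suc k) \<in> cp_S \<rightarrow>\<^sub>M paths (Suc k)"
  using measurable_compose[OF measurable_Pair1'[of \<omega> "paths k" cp_S] measurable_fun_upd_Suc] by simp

lemma measurable_fun_upd_Suc_transition:
  "\<omega> \<in> space (paths k) \<Longrightarrow> fun_upd \<omega> (Suc k) \<in> transition k \<omega> \<rightarrow>\<^sub>M paths (Suc k)"
  using measurable_fun_upd_Suc1 by (simp cong: measurable_cong_sets)

lemma measurable_extension:
  "(\<lambda>\<omega>. distr (transition k \<omega>) (paths (Suc k)) (fun_upd \<omega> (Suc k))) \<in> paths k \<rightarrow>\<^sub>M subprob_algebra (paths (Suc k))"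
  using measurable_distr2[OF measurable_fun_upd_Suc measurable_transition] by simp

lemma cp_prior_Suc: "prior (Suc k) = prior k \<bind> (\<lambda>\<omega>. distr (transition k \<omega>) (paths (Suc k)) (fun_upd \<omega> (Suc k)))"
  by (simp add: transition_def)

lemma sets_cp_prior[simp]: "sets (prior k) = sets (paths k)"
proof (induction k)
  case (Suc k)
  have "space (prior k) \<noteq> {}"
    using sets_eq_imp_space_eq[OF Suc] by (simp add: space_PiM PiE_eq_empty_iff)
  then show ?case
    unfolding cp_prior_Suc by (subst sets_bind) auto
qed simp

lemma space_cp_prior[simp]: "space (prior k) = space (paths k)"
  by (rule sets_eq_imp_space_eq) simp

lemma measurable_cp_prior[simp]: "measurable (prior k) N = measurable (paths k) N"
  by (rule measurable_cong_sets) simp_all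

lemma measurable_cp_priorI[measurable (raw)]: "f \<in> paths k \<rightarrow>\<^sub>M N \<Longrightarrow> f \<in> prior k \<rightarrow>\<^sub>M N"
  by simp

lemma nn_integral_cp_prior_Suc:
  assumes f: "f \<in> borel_measurable (paths (Suc k))"
  shows "(\<integral>\<^sup>+\<omega>. f \<omega> \<partial>prior (Suc k)) = (\<integral>\<^sup>+\<omega>. (\<integral>\<^sup>+s. f (fun_upd \<omega> (Suc k) s) \<partial>transition k \<omega>) \<partial>prior k)"
  unfolding cp_prior_Suc
proof (subst nn_integral_bind[OF f])
  show "(\<lambda>\<omega>. distr (transition k \<omega>) (paths (Suc k)) (fun_upd \<omega> (Suc k))) \<in> prior k \<rightarrow>\<^sub>M subprob_algebra (paths (Suc k))"
    using measurable_extension by simp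
  show "(\<integral>\<^sup>+\<omega>. integral\<^sup>N (distr (transition k \<omega>) (paths (Suc k)) (fun_upd \<omega> (Suc k))) f \<partial>prior k) =
      (\<integral>\<^sup>+\<omega>. (\<integral>\<^sup>+s. f (fun_upd \<omega> (Suc k) s) \<partial>transition k \<omega>) \<partial>prior k)"
    by (intro nn_integral_cong nn_integral_distr measurable_fun_upd_Suc_transition)
      (use f in \<open>simp_all cong: measurable_cong_sets\<close>)
qed

lemma nn_integral_cp_prior_Suc_mult:
  fixes h g :: "_ \<Rightarrow> ennreal"
  assumes h: "h \<in> borel_measurable (paths (Suc k))" and h_upd: "\<And>\<omega> s. h (fun_upd \<omega> (Suc k) s) = h \<omega>"
    and g: "g \<in> borel_measurable (paths (Suc k))"
  shows "(\<integral>\<^sup>+\<omega>. h \<omega> * g \<omega> \<partial>prior (Suc k)) =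
    (\<integral>\<^sup>+\<omega>. h \<omega> * (\<integral>\<^sup>+s. g (fun_upd \<omega> (Suc k) s) \<partial>transition k \<omega>) \<partial>prior k)"
proof -
  have "(\<integral>\<^sup>+\<omega>. h \<omega> * g \<omega> \<partial>prior (Suc k)) =
      (\<integral>\<^sup>+\<omega>. (\<integral>\<^sup>+s. h (fun_upd \<omega> (Suc k) s) * g (fun_upd \<omega> (Suc k) s) \<partial>transition k \<omega>) \<partial>prior k)"
    using h g by (intro nn_integral_cp_prior_Suc) measurable
  also have "\<dots> = (\<integral>\<^sup>+\<omega>. h \<omega> * (\<integral>\<^sup>+s. g (fun_upd \<omega> (Suc k) s) \<partial>transition k \<omega>) \<partial>prior k)"
  proof (rule nn_integral_cong)
    fix \<omega> assume "\<omega> \<in> space (prior k)"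
    then have "\<omega> \<in> space (paths k)"
      by simp
    from measurable_compose[OF measurable_fun_upd_Suc_transition[OF this] g]
    show "(\<integral>\<^sup>+s. h (fun_upd \<omega> (Suc k) s) * g (fun_upd \<omega> (Suc k) s) \<partial>transition k \<omega>) =
        h \<omega> * (\<integral>\<^sup>+s. g (fun_upd \<omega> (Suc k) s) \<partial>transition k \<omega>)"
      by (simp add: h_upd nn_integral_cmult)
  qed
  finally show ?thesis .
qed

lemma measurable_nn_integral_transition:
  fixes g :: "_ \<Rightarrow> ennreal"
  assumes "g \<in> borel_measurable (paths (Suc k))"
  shows "(\<lambda>\<omega>. \<integral>\<^sup>+s. g (fun_upd \<omega> (Suc k) s) \<partial>transition k \<omega>) \<in> borel_measurable (paths k)"
proof -
  have "(\<lambda>(\<omega>, s). g (fun_upd \<omega> (Suc k) s)) \<in> borel_measurable (paths k \<Otimes>\<^sub>M cp_S)"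
    using measurable_compose[OF measurable_fun_upd_Suc assms] by (simp add: case_prod_beta' fun_upd_def)
  then show ?thesis
    by (rule nn_integral_measurable_subprob_algebra2[OF _ measurable_transition])
qed

lemma nn_integral_cp_prior_marginal:
  fixes f :: "_ \<Rightarrow> ennreal"
  assumes "k \<le> n"
    and f: "\<And>m. k \<le> m \<Longrightarrow> f \<in> borel_measurable (paths m)"
    and f_upd: "\<And>\<omega> m s. k < m \<Longrightarrow> f (fun_upd \<omega> m s) = f \<omega>"
  shows "(\<integral>\<^sup>+\<omega>. f \<omega> \<partial>prior n) = (\<integral>\<^sup>+\<omega>. f \<omega> \<partial>prior k)"
  using \<open>k \<le> n\<close>
proof (induction n rule: dec_induct)
  case (step n)
  have "(\<integral>\<^sup>+\<omega>. f \<omega> \<partial>prior (Suc n)) = (\<integral>\<^sup>+\<omega>. (\<integral>\<^sup>+s. f (fun_upd \<omega> (Suc n) s) \<partial>transition n \<omega>) \<partial>prior n)"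
    using step by (intro nn_integral_cp_prior_Suc f) simp
  also have "\<dots> = (\<integral>\<^sup>+\<omega>. f \<omega> \<partial>prior n)"
    using step f_upd prob_space.emeasure_space_1[OF prob_space_transition] by simp
  finally show ?case
    using step by simp
qed simp

lemma measurable_cp_C[measurable]: "l \<in> {1..m} \<Longrightarrow> cp_C l \<in> paths m \<rightarrow>\<^sub>M count_space UNIV"
  unfolding cp_C_def[abs_def] cp_S_def by measurable

lemma measurable_cp_X[measurable]: "l \<in> {1..m} \<Longrightarrow> cp_X l \<in> paths m \<rightarrow>\<^sub>M borel"
  unfolding cp_X_def[abs_def] cp_S_def by measurable

lemma pred_cp_X_eq[measurable]:
  "l \<in> {1..m} \<Longrightarrow> l' \<in> {1..m} \<Longrightarrow> Measurable.pred (paths m) (\<lambda>\<omega>. cp_X l \<omega> = cp_X l' \<omega>)"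
  unfolding pred_def by (intro measurable_equality_set measurable_cp_X)

lemma measurable_indicator_cp_C[measurable]:
  assumes "l \<in> {1..m}"
  shows "(indicator {\<omega>. cp_C l \<omega> = c} :: _ \<Rightarrow> 'a::{t1_space, zero_neq_one}) \<in> borel_measurable (paths m)"
proof -
  have "Measurable.pred (paths m) (\<lambda>\<omega>. cp_C l \<omega> = c)"
    using assms by measurable
  then show ?thesis
    unfolding borel_measurable_indicator_iff pred_def by (simp add: Collect_conj_eq Int_commute)
qed

lemma measurable_jump_prob_cp_C[measurable]:
  "l \<in> {1..m} \<Longrightarrow> (\<lambda>\<omega>. jump_prob (cp_C l \<omega>) i) \<in> borel_measurable (paths m)"
  by (rule measurable_compose[OF measurable_cp_C]) simp_all

lemma cp_C_fun_upd[simp]: "m \<noteq> l \<Longrightarrow> cp_C l (fun_upd \<omega> m s) = cp_C l \<omega>"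
  by (simp add: cp_C_def)

lemma cp_X_fun_upd[simp]: "m \<noteq> l \<Longrightarrow> cp_X l (fun_upd \<omega> m s) = cp_X l \<omega>"
  by (simp add: cp_X_def)

lemma indicator_cp_C_fun_upd[simp]:
  "m \<noteq> l \<Longrightarrow> indicator {\<omega>. cp_C l \<omega> = c} (fun_upd \<omega> m s) = indicator {\<omega>. cp_C l \<omega> = c} \<omega>"
  by (simp add: indicator_def)

definition admissible :: "nat \<Rightarrow> (nat \<Rightarrow> nat \<times> 'x) \<Rightarrow> bool" where
  "admissible k \<omega> \<longleftrightarrow> (\<forall>l\<in>{1..k}. cp_C l \<omega> \<le> l \<and> (2 \<le> l \<longrightarrow> cp_C l \<omega> = l \<or> \<omega> l = \<omega> (l - 1)))"

lemma pred_admissible: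
  assumes "k \<le> m"
  shows "Measurable.pred (paths m) (admissible k)"
  unfolding admissible_def
proof (intro pred_intros_finite(3) pred_intros_imp' pred_intros_logic(3,5))
  fix l assume "l \<in> {1..k}"
  with assms have l: "l \<in> {1..m}"
    by simp
  then show "Measurable.pred (paths m) (\<lambda>\<omega>. cp_C l \<omega> \<le> l)" "Measurable.pred (paths m) (\<lambda>\<omega>. cp_C l \<omega> = l)"
    by measurable
  assume "2 \<le> l"
  with l have "l - 1 \<in> {1..m}"
    by auto
  with l show "Measurable.pred (paths m) (\<lambda>\<omega>. \<omega> l = \<omega> (l - 1))"
    unfolding prod_eq_iff cp_C_def[symmetric] cp_X_def[symmetric] by measurable
qed simp

lemma admissible_fun_upd_Suc:
  "admissible (Suc k) (fun_upd \<omega> (Suc k) s) \<longleftrightarrow>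
    admissible k \<omega> \<and> fst s \<le> Suc k \<and> (1 \<le> k \<longrightarrow> fst s = Suc k \<or> s = \<omega> k)"
proof -
  have "{1..Suc k} = insert (Suc k) {1..k}"
    by auto
  moreover have "(fun_upd \<omega> (Suc k) s) l = \<omega> l" "(fun_upd \<omega> (Suc k) s) (l - 1) = \<omega> (l - 1)"
    if "l \<in> {1..k}" for l
    using that by auto
  ultimately show ?thesis
    unfolding admissible_def cp_C_def by (auto cong: ball_cong)
qed

lemma pred_cp_S_stay_or_jump: "Measurable.pred cp_S (\<lambda>s. s = (s' :: nat \<times> 'x) \<or> fst s = i)"
proof -
  have "{s \<in> space cp_S. s = s' \<or> fst s = i} = {fst s'} \<times> {snd s'} \<union> {i} \<times> UNIV"
    by auto
  moreover have "{fst s'} \<times> {snd s'} \<union> {i} \<times> UNIV \<in> sets cp_S"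
    unfolding cp_S_def by (intro sets.Un pair_measureI borel_closed) auto
  ultimately show ?thesis
    unfolding pred_def by simp
qed

lemma AE_cp_step: "AE s in cp_step q J i s'. s = s' \<or> fst s = i"
proof -
  have sets: "{s \<in> space (cp_step q J i s'). s = s' \<or> fst s = i} \<in> sets (cp_step q J i s')"
    using pred_cp_S_stay_or_jump[of s' i] by (simp add: pred_def)
  have "indicator {s. \<not> (s = s' \<or> fst s = i)} \<in> borel_measurable cp_S"
    using pred_cp_S_stay_or_jump[of s' i] by measurable
  then show ?thesis
    unfolding AE_iff_nn_integral[OF sets] by (subst nn_integral_cp_step) (simp_all add: indicator_def)
qed

lemma AE_cp_init: "AE s in cp_init q J. fst s \<le> 1"
proof -
  have pred: "Measurable.pred cp_S (\<lambda>s. fst s \<le> 1)"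
    by (rule measurable_compose[OF measurable_fst_cp_S measurable_count_space])
  then have sets: "{s \<in> space (cp_init q J). fst s \<le> 1} \<in> sets (cp_init q J)"
    by (simp add: pred_def)
  have "indicator {s. \<not> fst s \<le> 1} \<in> borel_measurable cp_S"
    using pred by measurable
  then show ?thesis
    unfolding AE_iff_nn_integral[OF sets] by (subst nn_integral_cp_init) (simp_all add: indicator_def)
qed

lemma AE_transition:
  assumes "admissible k \<omega>"
  shows "AE s in transition k \<omega>. fst s \<le> Suc k \<and> (1 \<le> k \<longrightarrow> fst s = Suc k \<or> s = \<omega> k)"
proof (cases k)
  case 0
  then show ?thesis
    unfolding transition_def using AE_cp_init by (simp add: One_nat_def)
next
  case (Suc k')
  with assms have "fst (\<omega> k) \<le> k"
    unfolding admissible_def cp_C_def by auto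
  moreover have "transition k \<omega> = cp_step q J (Suc k) (\<omega> k)"
    using Suc by (simp add: transition_def)
  ultimately show ?thesis
    using AE_cp_step[where i="Suc k" and s'="\<omega> k"] by (simp only:) (rule AE_mp, auto)
qed

lemma AE_admissible: "AE \<omega> in prior k. admissible k \<omega>"
proof (induction k)
  case 0
  show ?case
    by (simp add: admissible_def)
next
  case (Suc k)
  have "AE \<omega> in prior k. AE \<omega>' in distr (transition k \<omega>) (paths (Suc k)) (fun_upd \<omega> (Suc k)).
      admissible (Suc k) \<omega>'"
    using Suc AE_space
  proof eventually_elim
    case (elim \<omega>)
    then have \<omega>: "\<omega> \<in> space (paths k)" and adm: "admissible k \<omega>"
      by simp_all
    have "{\<omega>' \<in> space (paths (Suc k)). admissible (Suc k) \<omega>'} \<in> sets (paths (Suc k))"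
      using pred_admissible[of "Suc k" "Suc k"] by (simp add: pred_def)
    moreover have "AE s in transition k \<omega>. admissible (Suc k) (fun_upd \<omega> (Suc k) s)"
      using AE_transition[OF adm] by eventually_elim (simp add: admissible_fun_upd_Suc adm)
    ultimately show ?case
      by (subst AE_distr_iff[OF measurable_fun_upd_Suc_transition[OF \<omega>]])
  qed
  then show ?case
    unfolding cp_prior_Suc using measurable_extension pred_admissible[of "Suc k" "Suc k"]
    by (subst AE_bind) (auto cong: measurable_cong_sets)
qed

lemma AE_segment_split:
  fixes f :: "'x \<Rightarrow> real" and g :: "(nat \<Rightarrow> nat \<times> 'x) \<Rightarrow> real"
  assumes "c \<le> k" "1 \<le> k" "Suc k \<le> n"
  shows "AE \<omega> in prior n. f (cp_X k \<omega>) * indicator {\<omega>. cp_C k \<omega> = c} \<omega> * g \<omega> =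
    f (cp_X k \<omega>) * indicator {\<omega>. cp_C k \<omega> = c} \<omega> * indicator {\<omega>. cp_C (Suc k) \<omega> = Suc k} \<omega> * g \<omega>
    + f (cp_X (Suc k) \<omega>) * indicator {\<omega>. cp_C (Suc k) \<omega> = c} \<omega> * g \<omega>"
  using AE_admissible[of n]
proof eventually_elim
  case (elim \<omega>)
  show ?case
  proof (cases "cp_C (Suc k) \<omega> = Suc k")
    case False
    have "Suc k \<in> {1..n}" "2 \<le> Suc k"
      using assms by auto
    with elim False have "\<omega> (Suc k) = \<omega> k"
      unfolding admissible_def by fastforce
    with False show ?thesis
      by (simp add: cp_C_def cp_X_def indicator_def)
  qed (use assms in \<open>simp add: indicator_def\<close>)
qed

subsection \<open>Past and future are independent given a changepoint\<close>

definition past_measurable :: "nat \<Rightarrow> ((nat \<Rightarrow> nat \<times> 'x) \<Rightarrow> ennreal) \<Rightarrow> bool" where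
  "past_measurable j h \<longleftrightarrow>
    (\<forall>m\<ge>j. h \<in> borel_measurable (paths m)) \<and> (\<forall>\<omega> m s. j < m \<longrightarrow> h (fun_upd \<omega> m s) = h \<omega>)"

definition future_after_jump :: "nat \<Rightarrow> nat \<Rightarrow> ((nat \<Rightarrow> nat \<times> 'x) \<Rightarrow> ennreal) \<Rightarrow> bool" where
  "future_after_jump j n g \<longleftrightarrow> g \<in> borel_measurable (paths n) \<and>
    (\<forall>\<omega>. cp_C (Suc j) \<omega> \<noteq> Suc j \<longrightarrow> g \<omega> = 0) \<and> (\<forall>\<omega> \<omega>'. (\<forall>l\<in>{Suc j..n}. \<omega> l = \<omega>' l) \<longrightarrow> g \<omega> = g \<omega>')"

lemma past_measurableI:
  "(\<And>m. j \<le> m \<Longrightarrow> h \<in> borel_measurable (paths m)) \<Longrightarrow>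
    (\<And>\<omega> m s. j < m \<Longrightarrow> h (fun_upd \<omega> m s) = h \<omega>) \<Longrightarrow> past_measurable j h"
  by (simp add: past_measurable_def)

lemma past_measurableD:
  assumes "past_measurable j h"
  shows "j \<le> m \<Longrightarrow> h \<in> borel_measurable (paths m)" and "j < m \<Longrightarrow> h (fun_upd \<omega> m s) = h \<omega>"
  using assms unfolding past_measurable_def by blast+

lemma future_after_jumpD:
  assumes "future_after_jump j n g"
  shows "g \<in> borel_measurable (paths n)" and "cp_C (Suc j) \<omega> \<noteq> Suc j \<Longrightarrow> g \<omega> = 0"
    and "(\<forall>l\<in>{Suc j..n}. \<omega> l = \<omega>' l) \<Longrightarrow> g \<omega> = g \<omega>'"
  using assms unfolding future_after_jump_def by blast+

lemma nn_integral_transition_jump: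
  assumes "1 \<le> j" "admissible j \<omega>" "\<omega> \<in> space (paths j)" and g: "future_after_jump j (Suc j) g"
  shows "(\<integral>\<^sup>+s. g (fun_upd \<omega> (Suc j) s) \<partial>transition j \<omega>) =
    jump_prob (cp_C j \<omega>) (Suc j) * (\<integral>\<^sup>+x. g (\<lambda>_. (Suc j, x)) \<partial>J)"
proof -
  have "fst (\<omega> j) \<le> j"
    using assms(1,2) by (auto simp: admissible_def cp_C_def)
  then have stay: "g (fun_upd \<omega> (Suc j) (\<omega> j)) = 0"
    by (intro future_after_jumpD(2)[OF g]) (simp add: cp_C_def)
  have jump: "g (fun_upd \<omega> (Suc j) (Suc j, x)) = g (\<lambda>_. (Suc j, x))" for x
    by (rule future_after_jumpD(3)[OF g]) simp
  have "(\<lambda>s. g (fun_upd \<omega> (Suc j) s)) \<in> borel_measurable cp_S"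
    using measurable_compose[OF measurable_fun_upd_Suc1[OF assms(3)] future_after_jumpD(1)[OF g]] .
  moreover have "transition j \<omega> = cp_step q J (Suc j) (\<omega> j)"
    using \<open>1 \<le> j\<close> by (simp add: transition_def)
  ultimately show ?thesis
    by (simp add: nn_integral_cp_step stay jump cp_C_def)
qed

lemma nn_integral_cp_prior_Suc_jump:
  assumes "1 \<le> j" and h: "past_measurable j h" and g: "future_after_jump j (Suc j) g"
  shows "(\<integral>\<^sup>+\<omega>. h \<omega> * g \<omega> \<partial>prior (Suc j)) =
    (\<integral>\<^sup>+\<omega>. h \<omega> * jump_prob (cp_C j \<omega>) (Suc j) \<partial>prior j) * (\<integral>\<^sup>+x. g (\<lambda>_. (Suc j, x)) \<partial>J)"
proof -
  have [measurable]: "h \<in> borel_measurable (paths j)"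
    using h by (rule past_measurableD) simp
  have "(\<integral>\<^sup>+\<omega>. h \<omega> * g \<omega> \<partial>prior (Suc j)) =
      (\<integral>\<^sup>+\<omega>. h \<omega> * (\<integral>\<^sup>+s. g (fun_upd \<omega> (Suc j) s) \<partial>transition j \<omega>) \<partial>prior j)"
    by (intro nn_integral_cp_prior_Suc_mult past_measurableD[OF h] future_after_jumpD(1)[OF g]) simp_all
  also have "\<dots> = (\<integral>\<^sup>+\<omega>. h \<omega> * jump_prob (cp_C j \<omega>) (Suc j) * (\<integral>\<^sup>+x. g (\<lambda>_. (Suc j, x)) \<partial>J) \<partial>prior j)"
    using AE_admissible[of j] AE_space
    by (intro nn_integral_cong_AE, eventually_elim)
      (simp add: nn_integral_transition_jump[OF \<open>1 \<le> j\<close> _ _ g] mult.assoc)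
  also have "\<dots> = (\<integral>\<^sup>+\<omega>. h \<omega> * jump_prob (cp_C j \<omega>) (Suc j) \<partial>prior j) * (\<integral>\<^sup>+x. g (\<lambda>_. (Suc j, x)) \<partial>J)"
    using \<open>1 \<le> j\<close> by (intro nn_integral_multc) measurable
  finally show ?thesis .
qed

lemma future_after_jump_integrate_last:
  assumes "Suc j \<le> n" and g: "future_after_jump j (Suc n) g"
  shows "future_after_jump j n (\<lambda>\<omega>. \<integral>\<^sup>+s. g (fun_upd \<omega> (Suc n) s) \<partial>transition n \<omega>)"
  unfolding future_after_jump_def
proof (intro conjI allI impI)
  show "(\<lambda>\<omega>. \<integral>\<^sup>+s. g (fun_upd \<omega> (Suc n) s) \<partial>transition n \<omega>) \<in> borel_measurable (paths n)"
    by (rule measurable_nn_integral_transition[OF future_after_jumpD(1)[OF g]])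
  fix \<omega> \<omega>'
  show "(\<integral>\<^sup>+s. g (fun_upd \<omega> (Suc n) s) \<partial>transition n \<omega>) = 0" if "cp_C (Suc j) \<omega> \<noteq> Suc j"
  proof -
    have "g (fun_upd \<omega> (Suc n) s) = 0" for s
      using that assms(1) by (intro future_after_jumpD(2)[OF g]) (simp add: cp_C_def)
    then show ?thesis
      by simp
  qed
  assume eq: "\<forall>l\<in>{Suc j..n}. \<omega> l = \<omega>' l"
  with assms(1) have "transition n \<omega> = transition n \<omega>'"
    by (simp add: transition_def)
  moreover have "g (fun_upd \<omega> (Suc n) s) = g (fun_upd \<omega>' (Suc n) s)" for s
    by (rule future_after_jumpD(3)[OF g]) (use eq in \<open>auto simp: le_Suc_eq\<close>)
  ultimately show "(\<integral>\<^sup>+s. g (fun_upd \<omega> (Suc n) s) \<partial>transition n \<omega>) =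
      (\<integral>\<^sup>+s. g (fun_upd \<omega>' (Suc n) s) \<partial>transition n \<omega>')"
    by simp
qed

(* Given a changepoint at \<open>j + 1\<close>, the future is independent of the past: \<open>R\<close> does not depend on \<open>h\<close>. *)
lemma changepoint_factorization:
  assumes "1 \<le> j" "Suc j \<le> n" "future_after_jump j n g"
  obtains R where "\<And>h. past_measurable j h \<Longrightarrow>
    (\<integral>\<^sup>+\<omega>. h \<omega> * g \<omega> \<partial>prior n) = (\<integral>\<^sup>+\<omega>. h \<omega> * jump_prob (cp_C j \<omega>) (Suc j) \<partial>prior j) * R"
proof -
  have "\<exists>R. \<forall>h. past_measurable j h \<longrightarrow>
      (\<integral>\<^sup>+\<omega>. h \<omega> * g \<omega> \<partial>prior n) = (\<integral>\<^sup>+\<omega>. h \<omega> * jump_prob (cp_C j \<omega>) (Suc j) \<partial>prior j) * R"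
    using \<open>Suc j \<le> n\<close> \<open>future_after_jump j n g\<close>
  proof (induction n arbitrary: g rule: dec_induct)
    case base
    with nn_integral_cp_prior_Suc_jump[OF \<open>1 \<le> j\<close>] show ?case
      by blast
  next
    case (step n)
    from step.IH[OF future_after_jump_integrate_last[OF step.hyps(1) step.prems]]
    obtain R where R: "\<forall>h. past_measurable j h \<longrightarrow>
        (\<integral>\<^sup>+\<omega>. h \<omega> * (\<integral>\<^sup>+s. g (fun_upd \<omega> (Suc n) s) \<partial>transition n \<omega>) \<partial>prior n) =
        (\<integral>\<^sup>+\<omega>. h \<omega> * jump_prob (cp_C j \<omega>) (Suc j) \<partial>prior j) * R"
      by blast
    have "(\<integral>\<^sup>+\<omega>. h \<omega> * g \<omega> \<partial>prior (Suc n)) =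
        (\<integral>\<^sup>+\<omega>. h \<omega> * (\<integral>\<^sup>+s. g (fun_upd \<omega> (Suc n) s) \<partial>transition n \<omega>) \<partial>prior n)"
      if "past_measurable j h" for h
      by (intro nn_integral_cp_prior_Suc_mult past_measurableD[OF that] future_after_jumpD(1)[OF step.prems])
        (use step.hyps(1) in simp_all)
    with R show ?case
      by (intro exI[of _ R]) simp
  qed
  with that show ?thesis
    by blast
qed

lemma nn_integral_jump_indicator:
  assumes "1 \<le> j" "Suc j \<le> n" and h: "past_measurable j h"
  shows "(\<integral>\<^sup>+\<omega>. h \<omega> * indicator {\<omega>. cp_C (Suc j) \<omega> = Suc j} \<omega> \<partial>prior n) =
    (\<integral>\<^sup>+\<omega>. h \<omega> * jump_prob (cp_C j \<omega>) (Suc j) \<partial>prior j)"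
proof -
  have "(\<integral>\<^sup>+\<omega>. h \<omega> * indicator {\<omega>. cp_C (Suc j) \<omega> = Suc j} \<omega> \<partial>prior n) =
      (\<integral>\<^sup>+\<omega>. h \<omega> * indicator {\<omega>. cp_C (Suc j) \<omega> = Suc j} \<omega> \<partial>prior (Suc j))"
    using \<open>Suc j \<le> n\<close>
  proof (rule nn_integral_cp_prior_marginal)
    fix m assume "Suc j \<le> m"
    then have [measurable]: "h \<in> borel_measurable (paths m)"
      by (intro past_measurableD[OF h]) simp
    show "(\<lambda>\<omega>. h \<omega> * indicator {\<omega>. cp_C (Suc j) \<omega> = Suc j} \<omega>) \<in> borel_measurable (paths m)"
      by (insert \<open>Suc j \<le> m\<close>, measurable)
  qed (simp add: past_measurableD[OF h])
  also have "\<dots> = (\<integral>\<^sup>+\<omega>. h \<omega> * jump_prob (cp_C j \<omega>) (Suc j) \<partial>prior j)"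
  proof -
    have "future_after_jump j (Suc j) (indicator {\<omega>. cp_C (Suc j) \<omega> = Suc j})"
      using \<open>1 \<le> j\<close> by (auto simp: future_after_jump_def cp_C_def indicator_def)
    moreover have "(\<integral>\<^sup>+x. indicator {\<omega>. cp_C (Suc j) \<omega> = Suc j} (\<lambda>_. (Suc j, x)) \<partial>J) = 1"
      by (simp add: cp_C_def)
    ultimately show ?thesis
      using nn_integral_cp_prior_Suc_jump[OF \<open>1 \<le> j\<close> h] by (simp only: mult_1_right)
  qed
  finally show ?thesis .
qed

end

section \<open>Likelihood-weighted integrals\<close>

locale changepoint_model = changepoint_prior q J
  for q and J :: "'x::{second_countable_topology, t2_space} measure" +
  fixes p :: "'x \<Rightarrow> 'y \<Rightarrow> real" and y :: "nat \<Rightarrow> 'y"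
  assumes measurable_p: "\<And>z. (\<lambda>x. p x z) \<in> borel_measurable borel"
    and p_nonneg: "\<And>x z. 0 \<le> p x z"
begin

definition future_lik :: "nat \<Rightarrow> nat \<Rightarrow> (nat \<Rightarrow> nat \<times> 'x) \<Rightarrow> real" where
  "future_lik j n \<omega> = (\<Prod>l\<in>{Suc j..n}. p (cp_X l \<omega>) (y l))"

definition restricted_lik :: "nat \<Rightarrow> nat \<Rightarrow> (nat \<Rightarrow> nat \<times> 'x) \<Rightarrow> real" where
  "restricted_lik c j \<omega> = indicator {\<omega>. cp_C j \<omega> = c} \<omega> * cp_lik p y j \<omega>"

lemma measurable_cp_lik[measurable]: "j \<le> m \<Longrightarrow> cp_lik p y j \<in> borel_measurable (paths m)"
  unfolding cp_lik_def[abs_def]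
  by (intro borel_measurable_prod measurable_compose[OF measurable_cp_X measurable_p]) auto

lemma measurable_future_lik[measurable]: "n \<le> m \<Longrightarrow> future_lik j n \<in> borel_measurable (paths m)"
  unfolding future_lik_def[abs_def]
  by (intro borel_measurable_prod measurable_compose[OF measurable_cp_X measurable_p]) auto

lemma measurable_restricted_lik[measurable]:
  "j \<in> {1..m} \<Longrightarrow> restricted_lik c j \<in> borel_measurable (paths m)"
  unfolding restricted_lik_def[abs_def] by measurable

lemma cp_lik_nonneg: "0 \<le> cp_lik p y j \<omega>"
  unfolding cp_lik_def by (simp add: prod_nonneg p_nonneg)

lemma future_lik_nonneg: "0 \<le> future_lik j n \<omega>"
  unfolding future_lik_def by (simp add: prod_nonneg p_nonneg)

lemma restricted_lik_nonneg: "0 \<le> restricted_lik c j \<omega>"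
  unfolding restricted_lik_def by (simp add: cp_lik_nonneg)

lemma cp_lik_fun_upd[simp]: "j < m \<Longrightarrow> cp_lik p y j (fun_upd \<omega> m s) = cp_lik p y j \<omega>"
  unfolding cp_lik_def by (intro prod.cong) auto

lemma restricted_lik_fun_upd[simp]: "j < m \<Longrightarrow> restricted_lik c j (fun_upd \<omega> m s) = restricted_lik c j \<omega>"
  unfolding restricted_lik_def by simp

lemma cp_lik_split: "j \<le> n \<Longrightarrow> cp_lik p y n \<omega> = cp_lik p y j \<omega> * future_lik j n \<omega>"
proof -
  assume "j \<le> n"
  then have "{1..n} = {1..j} \<union> {Suc j..n}"
    by auto
  then show ?thesis
    unfolding cp_lik_def future_lik_def by (simp add: prod.union_disjoint)
qed

lemma cp_H_eq_distr_density:
  "cp_H q J p y n c j = distr (density (prior n)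
     (\<lambda>\<omega>. ennreal (restricted_lik c j \<omega> / (\<integral>\<omega>. restricted_lik c j \<omega> \<partial>prior n)))) borel (cp_X j)"
  unfolding cp_H_def restricted_lik_def ..

lemma integral_cp_H:
  assumes "j \<in> {1..n}" and f: "f \<in> borel_measurable borel"
  shows "(\<integral>x. f x \<partial>cp_H q J p y n c j) =
    (\<integral>\<omega>. restricted_lik c j \<omega> * f (cp_X j \<omega>) \<partial>prior n) / (\<integral>\<omega>. restricted_lik c j \<omega> \<partial>prior n)"
proof -
  define B where "B = (\<integral>\<omega>. restricted_lik c j \<omega> \<partial>prior n)"
  define g where "g \<omega> = restricted_lik c j \<omega> / B" for \<omega>
  have g: "g \<in> borel_measurable (prior n)"
    unfolding g_def[abs_def] using assms(1) by measurable
  have "0 \<le> B"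
    unfolding B_def by (simp add: restricted_lik_nonneg)
  then have g_nonneg: "AE \<omega> in prior n. 0 \<le> g \<omega>"
    by (simp add: g_def restricted_lik_nonneg)
  have X: "cp_X j \<in> density (prior n) g \<rightarrow>\<^sub>M borel"
    using measurable_cp_X[OF assms(1)] by (simp cong: measurable_cong_sets)
  have fX: "(\<lambda>\<omega>. f (cp_X j \<omega>)) \<in> borel_measurable (prior n)"
    using assms by measurable
  have "(\<integral>x. f x \<partial>cp_H q J p y n c j) = (\<integral>\<omega>. f (cp_X j \<omega>) \<partial>density (prior n) g)"
    unfolding cp_H_eq_distr_density B_def[symmetric] g_def[symmetric] by (rule integral_distr[OF X f])
  also have "\<dots> = (\<integral>\<omega>. g \<omega> *\<^sub>R f (cp_X j \<omega>) \<partial>prior n)"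
    by (rule integral_density[OF fX g g_nonneg])
  also have "\<dots> = (\<integral>\<omega>. restricted_lik c j \<omega> * f (cp_X j \<omega>) \<partial>prior n) / B"
    by (simp add: g_def)
  finally show ?thesis
    unfolding B_def .
qed

lemma integrable_restricted_lik_if_integrable_cp_H:
  assumes "j \<in> {1..n}" and f: "f \<in> borel_measurable borel"
    and int: "integrable (cp_H q J p y n c j) f" and B: "(\<integral>\<omega>. restricted_lik c j \<omega> \<partial>prior n) \<noteq> 0"
  shows "integrable (prior n) (\<lambda>\<omega>. restricted_lik c j \<omega> * f (cp_X j \<omega>))"
proof -
  define B where "B = (\<integral>\<omega>. restricted_lik c j \<omega> \<partial>prior n)"
  define g where "g \<omega> = restricted_lik c j \<omega> / B" for \<omega>
  have g: "g \<in> borel_measurable (prior n)"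
    unfolding g_def[abs_def] using assms(1) by measurable
  have "0 \<le> B"
    unfolding B_def by (simp add: restricted_lik_nonneg)
  then have g_nonneg: "AE \<omega> in prior n. 0 \<le> g \<omega>"
    by (simp add: g_def restricted_lik_nonneg)
  have X: "cp_X j \<in> density (prior n) g \<rightarrow>\<^sub>M borel"
    using measurable_cp_X[OF assms(1)] by (simp cong: measurable_cong_sets)
  have fX: "(\<lambda>\<omega>. f (cp_X j \<omega>)) \<in> borel_measurable (prior n)"
    using assms by measurable
  have "integrable (density (prior n) g) (\<lambda>\<omega>. f (cp_X j \<omega>))"
    using int unfolding cp_H_eq_distr_density B_def[symmetric] g_def[symmetric]
    by (subst (asm) integrable_distr_eq[OF X f])
  then have "integrable (prior n) (\<lambda>\<omega>. B * (g \<omega> * f (cp_X j \<omega>)))"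
    by (subst (asm) integrable_density[OF fX g g_nonneg]) simp
  with B show ?thesis
    by (simp add: g_def B_def)
qed

lemma cp_ct_less:
  "j < n \<Longrightarrow> cp_ct q J p y n c j =
    (\<integral>\<omega>. restricted_lik c j \<omega> * indicator {\<omega>. cp_C (Suc j) \<omega> = Suc j} \<omega> \<partial>prior n) /
    (\<integral>\<omega>. cp_lik p y j \<omega> * indicator {\<omega>. cp_C (Suc j) \<omega> = Suc j} \<omega> \<partial>prior n)"
  by (simp add: cp_ct_def cp_condP_def cp_condE_def restricted_lik_def ac_simps)

lemma cp_ct_last:
  "cp_ct q J p y n c n = (\<integral>\<omega>. restricted_lik c n \<omega> \<partial>prior n) / (\<integral>\<omega>. cp_lik p y n \<omega> \<partial>prior n)"
  by (simp add: cp_ct_def cp_condP_def cp_condE_def restricted_lik_def)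

lemma past_measurable_cp_lik: "past_measurable j (\<lambda>\<omega>. ennreal (cp_lik p y j \<omega>))"
  by (rule past_measurableI) simp_all

lemma past_measurable_restricted_lik:
  assumes "1 \<le> j" and f[measurable]: "f \<in> borel_measurable borel"
  shows "past_measurable j (\<lambda>\<omega>. ennreal (restricted_lik c j \<omega> * f (cp_X j \<omega>)))"
proof (rule past_measurableI)
  show "(\<lambda>\<omega>. ennreal (restricted_lik c j \<omega> * f (cp_X j \<omega>))) \<in> borel_measurable (paths m)" if "j \<le> m" for m
    by (insert \<open>1 \<le> j\<close> that, measurable)
qed simp

lemma nn_integral_restricted_lik_mult_jump_prob:
  assumes "1 \<le> j" "j \<le> n" and f[measurable]: "f \<in> borel_measurable borel"
  shows "(\<integral>\<^sup>+\<omega>. ennreal (restricted_lik c j \<omega> * f (cp_X j \<omega>)) * jump_prob (cp_C j \<omega>) (Suc j) \<partial>prior j) =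
    jump_prob c (Suc j) * (\<integral>\<^sup>+\<omega>. ennreal (restricted_lik c j \<omega> * f (cp_X j \<omega>)) \<partial>prior n)"
proof -
  have "ennreal (restricted_lik c j \<omega> * f (cp_X j \<omega>)) * jump_prob (cp_C j \<omega>) (Suc j) =
      ennreal (restricted_lik c j \<omega> * f (cp_X j \<omega>)) * jump_prob c (Suc j)" for \<omega>
    by (cases "cp_C j \<omega> = c") (simp_all add: restricted_lik_def)
  then have "(\<integral>\<^sup>+\<omega>. ennreal (restricted_lik c j \<omega> * f (cp_X j \<omega>)) * jump_prob (cp_C j \<omega>) (Suc j) \<partial>prior j) =
      (\<integral>\<^sup>+\<omega>. ennreal (restricted_lik c j \<omega> * f (cp_X j \<omega>)) \<partial>prior j) * jump_prob c (Suc j)"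
    by (simp only:) (rule nn_integral_multc, insert \<open>1 \<le> j\<close>, measurable)
  also have "(\<integral>\<^sup>+\<omega>. ennreal (restricted_lik c j \<omega> * f (cp_X j \<omega>)) \<partial>prior j) =
      (\<integral>\<^sup>+\<omega>. ennreal (restricted_lik c j \<omega> * f (cp_X j \<omega>)) \<partial>prior n)"
    using \<open>j \<le> n\<close>
  proof (rule nn_integral_cp_prior_marginal[symmetric])
    show "(\<lambda>\<omega>. ennreal (restricted_lik c j \<omega> * f (cp_X j \<omega>))) \<in> borel_measurable (paths m)" if "j \<le> m" for m
      by (insert \<open>1 \<le> j\<close> that, measurable)
  qed simp
  finally show ?thesis
    by (simp add: mult.commute)
qed

lemma nn_integral_restricted_lik_jump_indicator:
  assumes "1 \<le> j" "Suc j \<le> n"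
  shows "(\<integral>\<^sup>+\<omega>. ennreal (restricted_lik c j \<omega> * indicator {\<omega>. cp_C (Suc j) \<omega> = Suc j} \<omega>) \<partial>prior n) =
    jump_prob c (Suc j) * (\<integral>\<^sup>+\<omega>. ennreal (restricted_lik c j \<omega>) \<partial>prior n)"
proof -
  have "(\<integral>\<^sup>+\<omega>. ennreal (restricted_lik c j \<omega> * indicator {\<omega>. cp_C (Suc j) \<omega> = Suc j} \<omega>) \<partial>prior n) =
      (\<integral>\<^sup>+\<omega>. ennreal (restricted_lik c j \<omega>) * indicator {\<omega>. cp_C (Suc j) \<omega> = Suc j} \<omega> \<partial>prior n)"
    by (simp add: ennreal_mult'' ennreal_indicator)
  also have "\<dots> = (\<integral>\<^sup>+\<omega>. ennreal (restricted_lik c j \<omega> * 1) * jump_prob (cp_C j \<omega>) (Suc j) \<partial>prior j)"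
  proof -
    have "past_measurable j (\<lambda>\<omega>. ennreal (restricted_lik c j \<omega> * 1))"
      by (rule past_measurable_restricted_lik[OF assms(1)]) simp
    from nn_integral_jump_indicator[OF assms this] show ?thesis
      by simp
  qed
  also have "\<dots> = jump_prob c (Suc j) * (\<integral>\<^sup>+\<omega>. ennreal (restricted_lik c j \<omega>) \<partial>prior n)"
    using assms nn_integral_restricted_lik_mult_jump_prob[of j n "\<lambda>_. 1" c] by simp
  finally show ?thesis .
qed

lemma future_after_jump_future_lik:
  assumes "1 \<le> j" "Suc j \<le> n"
  shows "future_after_jump j n (\<lambda>\<omega>. ennreal (indicator {\<omega>. cp_C (Suc j) \<omega> = Suc j} \<omega> * future_lik j n \<omega>))"
  unfolding future_after_jump_def
proof (intro conjI allI impI)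
  show "(\<lambda>\<omega>. ennreal (indicator {\<omega>. cp_C (Suc j) \<omega> = Suc j} \<omega> * future_lik j n \<omega>)) \<in> borel_measurable (paths n)"
    by (insert assms, measurable)
  fix \<omega> \<omega>' :: "nat \<Rightarrow> nat \<times> 'x"
  assume "\<forall>l\<in>{Suc j..n}. \<omega> l = \<omega>' l"
  with assms have "cp_C (Suc j) \<omega> = cp_C (Suc j) \<omega>'" "future_lik j n \<omega> = future_lik j n \<omega>'"
    unfolding future_lik_def cp_X_def cp_C_def by (auto intro: prod.cong)
  then show "ennreal (indicator {\<omega>. cp_C (Suc j) \<omega> = Suc j} \<omega> * future_lik j n \<omega>) =
      ennreal (indicator {\<omega>. cp_C (Suc j) \<omega> = Suc j} \<omega>' * future_lik j n \<omega>')"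
    by (simp add: indicator_def)
qed simp

lemma segment_end_factorization:
  assumes "1 \<le> j" "Suc j \<le> n"
  obtains R where
    "(\<integral>\<^sup>+\<omega>. ennreal (indicator {\<omega>. cp_C (Suc j) \<omega> = Suc j} \<omega> * cp_lik p y n \<omega>) \<partial>prior n) =
      (\<integral>\<^sup>+\<omega>. ennreal (cp_lik p y j \<omega> * indicator {\<omega>. cp_C (Suc j) \<omega> = Suc j} \<omega>) \<partial>prior n) * R"
    "\<And>f. f \<in> borel_measurable borel \<Longrightarrow>
      (\<integral>\<^sup>+\<omega>. ennreal (indicator {\<omega>. cp_C j \<omega> = c} \<omega> * indicator {\<omega>. cp_C (Suc j) \<omega> = Suc j} \<omega> *
          cp_lik p y n \<omega> * f (cp_X j \<omega>)) \<partial>prior n) =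
      jump_prob c (Suc j) * (\<integral>\<^sup>+\<omega>. ennreal (restricted_lik c j \<omega> * f (cp_X j \<omega>)) \<partial>prior n) * R"
proof -
  define g where "g \<omega> = ennreal (indicator {\<omega>. cp_C (Suc j) \<omega> = Suc j} \<omega> * future_lik j n \<omega>)" for \<omega>
  have lik: "cp_lik p y n \<omega> = cp_lik p y j \<omega> * future_lik j n \<omega>" for \<omega>
    using assms by (intro cp_lik_split) simp
  have split: "ennreal (indicator {\<omega>. cp_C (Suc j) \<omega> = Suc j} \<omega> * cp_lik p y n \<omega>) = ennreal (cp_lik p y j \<omega>) * g \<omega>"
    "ennreal (indicator {\<omega>. cp_C j \<omega> = c} \<omega> * indicator {\<omega>. cp_C (Suc j) \<omega> = Suc j} \<omega> * cp_lik p y n \<omega> * f (cp_X j \<omega>)) =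
      ennreal (restricted_lik c j \<omega> * f (cp_X j \<omega>)) * g \<omega>"
    for \<omega> f
  proof -
    have "indicator {\<omega>. cp_C (Suc j) \<omega> = Suc j} \<omega> * cp_lik p y n \<omega> =
        cp_lik p y j \<omega> * (indicator {\<omega>. cp_C (Suc j) \<omega> = Suc j} \<omega> * future_lik j n \<omega>)"
      "indicator {\<omega>. cp_C j \<omega> = c} \<omega> * indicator {\<omega>. cp_C (Suc j) \<omega> = Suc j} \<omega> * cp_lik p y n \<omega> * f (cp_X j \<omega>) =
        restricted_lik c j \<omega> * f (cp_X j \<omega>) * (indicator {\<omega>. cp_C (Suc j) \<omega> = Suc j} \<omega> * future_lik j n \<omega>)"
      unfolding lik restricted_lik_def by (simp_all only: mult_ac)
    then show "ennreal (indicator {\<omega>. cp_C (Suc j) \<omega> = Suc j} \<omega> * cp_lik p y n \<omega>) = ennreal (cp_lik p y j \<omega>) * g \<omega>"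
      "ennreal (indicator {\<omega>. cp_C j \<omega> = c} \<omega> * indicator {\<omega>. cp_C (Suc j) \<omega> = Suc j} \<omega> * cp_lik p y n \<omega> * f (cp_X j \<omega>)) =
        ennreal (restricted_lik c j \<omega> * f (cp_X j \<omega>)) * g \<omega>"
      unfolding g_def by (simp_all only:) (rule ennreal_mult''; simp add: future_lik_nonneg)+
  qed
  have "future_after_jump j n g"
    unfolding g_def using assms by (rule future_after_jump_future_lik)
  with changepoint_factorization[OF assms] obtain R where
    R: "\<And>h. past_measurable j h \<Longrightarrow>
      (\<integral>\<^sup>+\<omega>. h \<omega> * g \<omega> \<partial>prior n) = (\<integral>\<^sup>+\<omega>. h \<omega> * jump_prob (cp_C j \<omega>) (Suc j) \<partial>prior j) * R"
    by blast
  show ?thesis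
  proof (rule that)
    have "(\<integral>\<^sup>+\<omega>. ennreal (cp_lik p y j \<omega>) * g \<omega> \<partial>prior n) =
        (\<integral>\<^sup>+\<omega>. ennreal (cp_lik p y j \<omega>) * jump_prob (cp_C j \<omega>) (Suc j) \<partial>prior j) * R"
      by (rule R[OF past_measurable_cp_lik])
    also have "(\<integral>\<^sup>+\<omega>. ennreal (cp_lik p y j \<omega>) * jump_prob (cp_C j \<omega>) (Suc j) \<partial>prior j) =
        (\<integral>\<^sup>+\<omega>. ennreal (cp_lik p y j \<omega>) * indicator {\<omega>. cp_C (Suc j) \<omega> = Suc j} \<omega> \<partial>prior n)"
      by (rule nn_integral_jump_indicator[OF assms past_measurable_cp_lik, symmetric])
    finally show "(\<integral>\<^sup>+\<omega>. ennreal (indicator {\<omega>. cp_C (Suc j) \<omega> = Suc j} \<omega> * cp_lik p y n \<omega>) \<partial>prior n) =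
        (\<integral>\<^sup>+\<omega>. ennreal (cp_lik p y j \<omega> * indicator {\<omega>. cp_C (Suc j) \<omega> = Suc j} \<omega>) \<partial>prior n) * R"
      by (simp add: split ennreal_mult'' ennreal_indicator)
  next
    fix f :: "'x \<Rightarrow> real" assume f: "f \<in> borel_measurable borel"
    have "(\<integral>\<^sup>+\<omega>. ennreal (restricted_lik c j \<omega> * f (cp_X j \<omega>)) * g \<omega> \<partial>prior n) =
        (\<integral>\<^sup>+\<omega>. ennreal (restricted_lik c j \<omega> * f (cp_X j \<omega>)) * jump_prob (cp_C j \<omega>) (Suc j) \<partial>prior j) * R"
      by (rule R[OF past_measurable_restricted_lik[OF assms(1) f]])
    also have "\<dots> = jump_prob c (Suc j) * (\<integral>\<^sup>+\<omega>. ennreal (restricted_lik c j \<omega> * f (cp_X j \<omega>)) \<partial>prior n) * R"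
      using assms by (subst nn_integral_restricted_lik_mult_jump_prob[OF \<open>1 \<le> j\<close> _ f]) simp_all
    finally show "(\<integral>\<^sup>+\<omega>. ennreal (indicator {\<omega>. cp_C j \<omega> = c} \<omega> * indicator {\<omega>. cp_C (Suc j) \<omega> = Suc j} \<omega> *
          cp_lik p y n \<omega> * f (cp_X j \<omega>)) \<partial>prior n) =
        jump_prob c (Suc j) * (\<integral>\<^sup>+\<omega>. ennreal (restricted_lik c j \<omega> * f (cp_X j \<omega>)) \<partial>prior n) * R"
      by (simp only: split)
  qed
qed

lemma nn_integral_restricted_lik_mult_eq_0:
  assumes "1 \<le> j" "j \<le> n" and "(\<integral>\<^sup>+\<omega>. ennreal (restricted_lik c j \<omega>) \<partial>prior n) = 0"
  shows "(\<integral>\<^sup>+\<omega>. ennreal (restricted_lik c j \<omega> * f \<omega>) \<partial>prior n) = 0"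
proof -
  have [measurable]: "restricted_lik c j \<in> borel_measurable (prior n)"
    using measurable_restricted_lik[of j n c] assms by simp
  have "AE \<omega> in prior n. ennreal (restricted_lik c j \<omega>) = 0"
    using assms(3) by (subst (asm) nn_integral_0_iff_AE) measurable
  then have "AE \<omega> in prior n. ennreal (restricted_lik c j \<omega> * f \<omega>) = 0"
    by eventually_elim (simp add: restricted_lik_nonneg)
  then show ?thesis
    by (simp add: nn_integral_0_iff_AE[symmetric] nn_integral_cong_AE)
qed

lemma nn_integral_finite_if_le_cp_lik:
  assumes Z: "(\<integral>\<omega>. cp_lik p y n \<omega> \<partial>prior n) \<noteq> 0" and u: "\<And>\<omega>. u \<omega> \<le> cp_lik p y n \<omega>"
  shows "(\<integral>\<^sup>+\<omega>. ennreal (u \<omega>) \<partial>prior n) \<noteq> \<infinity>"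
proof -
  have "(\<integral>\<omega>. cp_lik p y n \<omega> \<partial>prior n) = enn2real (\<integral>\<^sup>+\<omega>. ennreal (cp_lik p y n \<omega>) \<partial>prior n)"
    by (rule integral_eq_nn_integral) (simp_all add: cp_lik_nonneg)
  with Z have "(\<integral>\<^sup>+\<omega>. ennreal (cp_lik p y n \<omega>) \<partial>prior n) \<noteq> \<infinity>"
    by auto
  moreover have "(\<integral>\<^sup>+\<omega>. ennreal (u \<omega>) \<partial>prior n) \<le> (\<integral>\<^sup>+\<omega>. ennreal (cp_lik p y n \<omega>) \<partial>prior n)"
    using u by (intro nn_integral_mono ennreal_leI)
  ultimately show ?thesis
    by (auto simp: top_unique)
qed

subsection \<open>Decomposition along the end of the segment\<close>

context
  fixes T :: "'x \<Rightarrow> real" and n i :: nat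
  assumes T_measurable[measurable]: "T \<in> borel_measurable borel"
    and i_bounds: "1 \<le> i" "i \<le> n"
    and integrable_T: "\<And>j. i \<le> j \<Longrightarrow> j \<le> n \<Longrightarrow> integrable (cp_H q J p y n i j) T"
begin

lemma integral_segment_end:
  assumes "i \<le> j" "j < n" and Z: "(\<integral>\<omega>. cp_lik p y n \<omega> \<partial>prior n) \<noteq> 0"
  defines "W \<equiv> \<lambda>\<omega>. T (cp_X j \<omega>) * indicator {\<omega>. cp_C j \<omega> = i} \<omega> *
      indicator {\<omega>. cp_C (Suc j) \<omega> = Suc j} \<omega> * cp_lik p y n \<omega>"
  shows "integrable (prior n) W \<and> (\<integral>\<omega>. W \<omega> \<partial>prior n) = (\<integral>x. T x \<partial>cp_H q J p y n i j) * cp_ct q J p y n i j *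
      (\<integral>\<omega>. indicator {\<omega>. cp_C (Suc j) \<omega> = Suc j} \<omega> * cp_lik p y n \<omega> \<partial>prior n)"
proof -
  have j: "1 \<le> j" "Suc j \<le> n" "j \<in> {1..n}" "Suc j \<in> {1..n}"
    using assms i_bounds by auto
  let ?I = "indicator {\<omega>. cp_C (Suc j) \<omega> = Suc j} :: _ \<Rightarrow> real"
  let ?v = "\<lambda>\<omega>. restricted_lik i j \<omega> * T (cp_X j \<omega>)"
  define B where "B = (\<integral>\<^sup>+\<omega>. ennreal (restricted_lik i j \<omega>) \<partial>prior n)"
  define D where "D = (\<integral>\<^sup>+\<omega>. ennreal (restricted_lik i j \<omega> * ?I \<omega>) \<partial>prior n)"
  define E where "E = (\<integral>\<^sup>+\<omega>. ennreal (cp_lik p y j \<omega> * ?I \<omega>) \<partial>prior n)"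
  define F where "F = (\<integral>\<^sup>+\<omega>. ennreal (?I \<omega> * cp_lik p y n \<omega>) \<partial>prior n)"
  obtain R where F_eq: "F = E * R"
    and factorization: "\<And>f. f \<in> borel_measurable borel \<Longrightarrow>
      (\<integral>\<^sup>+\<omega>. ennreal (indicator {\<omega>. cp_C j \<omega> = i} \<omega> * ?I \<omega> * cp_lik p y n \<omega> * f (cp_X j \<omega>)) \<partial>prior n) =
      jump_prob i (Suc j) * (\<integral>\<^sup>+\<omega>. ennreal (restricted_lik i j \<omega> * f (cp_X j \<omega>)) \<partial>prior n) * R"
    unfolding E_def F_def using segment_end_factorization[OF j(1,2), where c = i] by blast
  have T_neg: "(\<lambda>x. - T x) \<in> borel_measurable borel"
    by measurable
  have W: "W \<omega> = indicator {\<omega>. cp_C j \<omega> = i} \<omega> * ?I \<omega> * cp_lik p y n \<omega> * T (cp_X j \<omega>)"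
    "- W \<omega> = indicator {\<omega>. cp_C j \<omega> = i} \<omega> * ?I \<omega> * cp_lik p y n \<omega> * - T (cp_X j \<omega>)"
    "- ?v \<omega> = restricted_lik i j \<omega> * - T (cp_X j \<omega>)" for \<omega>
    by (simp_all add: W_def ac_simps)
  have "integrable (prior n) W \<and> (\<integral>\<omega>. W \<omega> \<partial>prior n) =
      (\<integral>\<omega>. ?v \<omega> \<partial>prior n) / enn2real B * (enn2real D / enn2real E) * enn2real F"
  proof (rule integral_eq_of_nn_integral_factorization)
    show "W \<in> borel_measurable (prior n)"
      unfolding W_def by (insert j, measurable)
    show "D = jump_prob i (Suc j) * B"
      unfolding D_def B_def using j(1,2) by (rule nn_integral_restricted_lik_jump_indicator)
    show "D \<le> E"
      unfolding D_def E_def restricted_lik_def by (intro nn_integral_mono) (simp add: indicator_def cp_lik_nonneg)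
    show "F \<noteq> \<infinity>"
      unfolding F_def using Z by (rule nn_integral_finite_if_le_cp_lik) (simp add: indicator_def cp_lik_nonneg)
    show "(\<integral>\<^sup>+\<omega>. ennreal (W \<omega>) \<partial>prior n) = jump_prob i (Suc j) * (\<integral>\<^sup>+\<omega>. ennreal (?v \<omega>) \<partial>prior n) * R"
      unfolding W(1) by (rule factorization[OF T_measurable])
    show "(\<integral>\<^sup>+\<omega>. ennreal (- W \<omega>) \<partial>prior n) = jump_prob i (Suc j) * (\<integral>\<^sup>+\<omega>. ennreal (- ?v \<omega>) \<partial>prior n) * R"
      unfolding W(2,3) using factorization[OF T_neg] by simp
    show "(\<integral>\<^sup>+\<omega>. ennreal (?v \<omega>) \<partial>prior n) = 0 \<and> (\<integral>\<^sup>+\<omega>. ennreal (- ?v \<omega>) \<partial>prior n) = 0" if "B = 0"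
      using that j nn_integral_restricted_lik_mult_eq_0[of j n i "\<lambda>\<omega>. T (cp_X j \<omega>)"]
        nn_integral_restricted_lik_mult_eq_0[of j n i "\<lambda>\<omega>. - T (cp_X j \<omega>)"]
      unfolding B_def by simp
    show "integrable (prior n) ?v" if "B \<noteq> 0" "B \<noteq> \<infinity>"
    proof (rule integrable_restricted_lik_if_integrable_cp_H[OF j(3) T_measurable integrable_T])
      show "(\<integral>\<omega>. restricted_lik i j \<omega> \<partial>prior n) \<noteq> 0"
        using that j unfolding B_def
        by (subst integral_eq_nn_integral) (simp_all add: restricted_lik_nonneg enn2real_eq_0_iff)
    qed (use assms in simp_all)
  qed (simp_all add: jump_prob_nonneg F_eq)
  moreover have "(\<integral>\<omega>. restricted_lik i j \<omega> \<partial>prior n) = enn2real B"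
    "(\<integral>\<omega>. restricted_lik i j \<omega> * ?I \<omega> \<partial>prior n) = enn2real D"
    "(\<integral>\<omega>. cp_lik p y j \<omega> * ?I \<omega> \<partial>prior n) = enn2real E"
    "(\<integral>\<omega>. ?I \<omega> * cp_lik p y n \<omega> \<partial>prior n) = enn2real F"
    unfolding B_def D_def E_def F_def using j
    by (intro integral_eq_nn_integral; simp add: restricted_lik_nonneg cp_lik_nonneg)+
  ultimately show ?thesis
    using integral_cp_H[OF j(3) T_measurable] cp_ct_less[OF \<open>j < n\<close>] by simp
qed

lemma integral_segment_last:
  assumes Z: "(\<integral>\<omega>. cp_lik p y n \<omega> \<partial>prior n) \<noteq> 0"
  defines "V \<equiv> \<lambda>\<omega>. T (cp_X n \<omega>) * indicator {\<omega>. cp_C n \<omega> = i} \<omega> * cp_lik p y n \<omega>"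
  shows "integrable (prior n) V \<and>
    (\<integral>\<omega>. V \<omega> \<partial>prior n) = (\<integral>x. T x \<partial>cp_H q J p y n i n) * (\<integral>\<omega>. restricted_lik i n \<omega> \<partial>prior n)"
proof -
  have n: "n \<in> {1..n}"
    using i_bounds by simp
  have V_eq: "V = (\<lambda>\<omega>. restricted_lik i n \<omega> * T (cp_X n \<omega>))"
    by (simp add: V_def restricted_lik_def fun_eq_iff ac_simps)
  have V_meas: "V \<in> borel_measurable (prior n)"
    unfolding V_eq by (insert n, measurable)
  define B where "B = (\<integral>\<^sup>+\<omega>. ennreal (restricted_lik i n \<omega>) \<partial>prior n)"
  have B_real: "(\<integral>\<omega>. restricted_lik i n \<omega> \<partial>prior n) = enn2real B"
    unfolding B_def using n by (intro integral_eq_nn_integral) (simp_all add: restricted_lik_nonneg)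
  have B_finite: "B \<noteq> \<infinity>"
    unfolding B_def restricted_lik_def using Z
    by (rule nn_integral_finite_if_le_cp_lik) (simp add: indicator_def cp_lik_nonneg)
  show ?thesis
  proof (cases "B = 0")
    case True
    then have "(\<integral>\<^sup>+\<omega>. ennreal (V \<omega>) \<partial>prior n) = 0" "(\<integral>\<^sup>+\<omega>. ennreal (- V \<omega>) \<partial>prior n) = 0"
      unfolding V_eq B_def using n
      nn_integral_restricted_lik_mult_eq_0[where f="\<lambda>\<omega>. - T (cp_X n \<omega>)" and j=n and n=n]
      by (auto intro: nn_integral_restricted_lik_mult_eq_0)
    then show ?thesis
      using integral_eq_cmult_if_nn_integral_parts_eq[OF V_meas, where v="\<lambda>_. 0" and c=0 and N="prior n"]
        B_real True by simp
  next
    case False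
    with B_finite B_real have "(\<integral>\<omega>. restricted_lik i n \<omega> \<partial>prior n) \<noteq> 0"
      by (simp add: enn2real_eq_0_iff)
    moreover have "integrable (prior n) V"
      unfolding V_eq using i_bounds calculation
      by (intro integrable_restricted_lik_if_integrable_cp_H integrable_T) simp_all
    ultimately show ?thesis
      using integral_cp_H[OF n T_measurable] by (simp add: V_eq)
  qed
qed

lemma integral_segments:
  assumes Z: "(\<integral>\<omega>. cp_lik p y n \<omega> \<partial>prior n) \<noteq> 0" and "i \<le> k" "k \<le> n"
  defines "V \<equiv> \<lambda>k \<omega>. T (cp_X k \<omega>) * indicator {\<omega>. cp_C k \<omega> = i} \<omega> * cp_lik p y n \<omega>"
  shows "integrable (prior n) (V k) \<and>
    (\<integral>\<omega>. V k \<omega> \<partial>prior n) = (\<Sum>j\<in>{k..<n}. (\<integral>x. T x \<partial>cp_H q J p y n i j) * cp_ct q J p y n i j *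
        (\<integral>\<omega>. indicator {\<omega>. cp_C (Suc j) \<omega> = Suc j} \<omega> * cp_lik p y n \<omega> \<partial>prior n))
      + (\<integral>x. T x \<partial>cp_H q J p y n i n) * (\<integral>\<omega>. restricted_lik i n \<omega> \<partial>prior n)"
  using \<open>k \<le> n\<close> \<open>i \<le> k\<close>
proof (induction k rule: inc_induct)
  case base
  then show ?case
    using integral_segment_last[OF Z] unfolding V_def by simp
next
  case (step k)
  let ?W = "\<lambda>\<omega>. T (cp_X k \<omega>) * indicator {\<omega>. cp_C k \<omega> = i} \<omega> *
      indicator {\<omega>. cp_C (Suc k) \<omega> = Suc k} \<omega> * cp_lik p y n \<omega>"
  have k: "k \<in> {1..n}"
    using step i_bounds by simp
  have AE_split: "AE \<omega> in prior n. V k \<omega> = ?W \<omega> + V (Suc k) \<omega>"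
    unfolding V_def using step k by (intro AE_segment_split) simp_all
  have V_meas: "V k \<in> borel_measurable (prior n)"
    unfolding V_def by (insert k, measurable)
  obtain W_int: "integrable (prior n) ?W"
    and W_integral: "(\<integral>\<omega>. ?W \<omega> \<partial>prior n) = (\<integral>x. T x \<partial>cp_H q J p y n i k) * cp_ct q J p y n i k *
      (\<integral>\<omega>. indicator {\<omega>. cp_C (Suc k) \<omega> = Suc k} \<omega> * cp_lik p y n \<omega> \<partial>prior n)"
    using integral_segment_end[OF \<open>i \<le> k\<close> \<open>k < n\<close> Z] by blast
  obtain V_int: "integrable (prior n) (V (Suc k))" and V_integral: "(\<integral>\<omega>. V (Suc k) \<omega> \<partial>prior n) =
      (\<Sum>j\<in>{Suc k..<n}. (\<integral>x. T x \<partial>cp_H q J p y n i j) * cp_ct q J p y n i j *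
        (\<integral>\<omega>. indicator {\<omega>. cp_C (Suc j) \<omega> = Suc j} \<omega> * cp_lik p y n \<omega> \<partial>prior n))
      + (\<integral>x. T x \<partial>cp_H q J p y n i n) * (\<integral>\<omega>. restricted_lik i n \<omega> \<partial>prior n)"
    using step.IH \<open>i \<le> k\<close> by auto
  have sum_int: "integrable (prior n) (\<lambda>\<omega>. ?W \<omega> + V (Suc k) \<omega>)"
    using W_int V_int by (rule Bochner_Integration.integrable_add)
  have "integrable (prior n) (V k)"
    using integrable_cong_AE[OF V_meas borel_measurable_integrable[OF sum_int] AE_split] sum_int by simp
  moreover have "(\<integral>\<omega>. V k \<omega> \<partial>prior n) = (\<integral>\<omega>. ?W \<omega> + V (Suc k) \<omega> \<partial>prior n)"
    using V_meas borel_measurable_integrable[OF sum_int] AE_split by (rule integral_cong_AE)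
  ultimately show ?case
    using \<open>k < n\<close> W_int V_int
    by (simp add: W_integral V_integral sum.atLeast_Suc_lessThan)
qed

lemma cp_condE_changepoint_statistic:
  "cp_condE q J p y n n (\<lambda>\<omega>. T (cp_X i \<omega>) * indicator {\<omega>. cp_C i \<omega> = i} \<omega>) UNIV =
    (\<Sum>j=i..n-1. (\<integral>x. T x \<partial>cp_H q J p y n i j) * cp_ct q J p y n i j * cp_qt q J p y n (Suc j))
    + (\<integral>x. T x \<partial>cp_H q J p y n i n) * cp_ct q J p y n i n"
proof (cases "(\<integral>\<omega>. cp_lik p y n \<omega> \<partial>prior n) = 0")
  case True
  then show ?thesis
    by (simp add: cp_condE_def cp_ct_last cp_qt_def cp_condP_def)
next
  case False
  have "{i..n-1} = {i..<n}"
    using i_bounds by auto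
  with integral_segments[OF False order_refl i_bounds(2)] False show ?thesis
    by (simp add: cp_condE_def cp_qt_def cp_condP_def cp_ct_last sum_divide_distrib add_divide_distrib)
qed

end

end

theorem mainTheorem17:
  fixes n :: nat
    and q :: "nat \<Rightarrow> nat \<Rightarrow> real"
    and J :: "'x::polish_space measure"
    and \<psi> :: "'y::polish_space measure"
    and p :: "'x \<Rightarrow> 'y \<Rightarrow> real"
    and y :: "nat \<Rightarrow> 'y"
    and T :: "'x \<Rightarrow> real"
    and i :: nat
  assumes n_pos: "1 \<le> n"
    and J_prob: "prob_space J" and J_sets: "sets J = sets borel"
    and \<psi>_sets: "sets \<psi> = sets borel" and \<psi>_fin: "sigma_finite_measure \<psi>"
    and q_range: "\<And>j i. j < i \<Longrightarrow> i \<le> n \<Longrightarrow> 0 \<le> q j i \<and> q j i \<le> 1"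
    and p_meas: "(\<lambda>(x, z). p x z) \<in> borel_measurable (borel \<Otimes>\<^sub>M \<psi>)"
    and p_nonneg: "\<And>x z. 0 \<le> p x z"
    and p_dens: "\<And>x. (\<integral>\<^sup>+ z. ennreal (p x z) \<partial>\<psi>) = 1"
    and pos: "\<And>j i. 0 < j \<Longrightarrow> j \<le> i \<Longrightarrow> i \<le> n \<Longrightarrow>
               (\<integral>\<^sup>+ x. ennreal (\<Prod>l\<in>{j..i}. p x (y l)) \<partial>J) > 0"
    and T_meas: "T \<in> borel_measurable borel"
    and T_int: "\<And>j i. 0 < i \<Longrightarrow> j \<le> i \<Longrightarrow> i \<le> n \<Longrightarrow> integrable (cp_H q J p y n j i) T"
    and i_range: "0 < i" "i \<le> n"
  shows "cp_condE q J p y n n (\<lambda>\<omega>. T (cp_X i \<omega>) * indicator {\<omega>. cp_C i \<omega> = i} \<omega>) UNIV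
       = (\<Sum>j=i..n-1. (\<integral>x. T x \<partial>cp_H q J p y n i j) * cp_ct q J p y n i j * cp_qt q J p y n (Suc j))
         + (\<integral>x. T x \<partial>cp_H q J p y n i n) * cp_ct q J p y n i n"
proof -
  have p_measurable: "(\<lambda>x. p x z) \<in> borel_measurable borel" for z
  proof -
    have "(\<lambda>x. (x, z)) \<in> borel \<rightarrow>\<^sub>M borel \<Otimes>\<^sub>M \<psi>"
      using sets_eq_imp_space_eq[OF \<psi>_sets] by simp
    from measurable_compose[OF this p_meas] show ?thesis
      by simp
  qed
  interpret changepoint_model q J p y
    using J_prob J_sets p_measurable p_nonneg
    by (simp add: changepoint_model_def changepoint_prior_def changepoint_model_axioms_def)
  show ?thesis
    using T_meas i_range by (intro cp_condE_changepoint_statistic T_int) auto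
qed

end
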